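(* Let $0<\lambda\le1$ and $f\in\mathcal U(\lambda)$ with $\dfrac{z}{f(z)}=1+\sum_{k=1}^\infty b_kz^k$ in $\mathbb D$. Define $g$ by $$\frac{z}{g(z)}=1+\sum_{k=1}^\infty \operatorname{Re}\{b_k\}\,z^k,\qquad z\in\mathbb D.$$ If $z/g(z)\ne0$ for all $z\in\mathbb D$, then $g\in\mathcal U(\lambda)$.
   Context: $\mathbb D=\{z\in\mathbb C:|z|<1\}$. $\mathcal A$ is the class of functions $f$ analytic in $\mathbb D$ with $f(z)=z+\sum_{k\ge2}a_kz^k$. For $f\in\mathcal A$ with $f(z)\ne0$ for $z\in\mathbb D\setminus\{0\}$, set $U_f(z)=\left(\frac{z}{f(z)}\right)^2f'(z)-1$. For $0<\lambda\le1$, $\mathcal U(\lambda)$ is the class of such $f\in\mathcal A$ with $|U_f(z)|<\lambda$ for all $z\in\mathbb D$. *)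

theory Defs
  imports "HOL-Analysis.Analysis"
begin

abbreviation unit_disk :: "complex set" where
  "unit_disk \<equiv> ball 0 1"

definition classA :: "(complex \<Rightarrow> complex) \<Rightarrow> bool" where
  "classA f \<longleftrightarrow> f analytic_on unit_disk \<and> f 0 = 0 \<and> deriv f 0 = 1"

text \<open>The function z/f(z), with its removable value 1 at z = 0 (since f(0)=0, f'(0)=1).\<close>
definition zdivf :: "(complex \<Rightarrow> complex) \<Rightarrow> complex \<Rightarrow> complex" where
  "zdivf f z = (if z = 0 then 1 else z / f z)"

definition Uf :: "(complex \<Rightarrow> complex) \<Rightarrow> complex \<Rightarrow> complex" where
  "Uf f z = (zdivf f z)^2 * deriv f z - 1"

definition classU :: "real \<Rightarrow> (complex \<Rightarrow> complex) \<Rightarrow> bool" where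
  "classU lam f \<longleftrightarrow> classA f \<and> (\<forall>z\<in>unit_disk - {0}. f z \<noteq> 0)
      \<and> (\<forall>z\<in>unit_disk. cmod (Uf f z) < lam)"

end

theory Submission
  imports Defs "HOL-Complex_Analysis.Cauchy_Integral_Formula"
begin

text \<open>Writing \<open>f(z) = z / p(z)\<close>, one has \<open>U\<^sub>f = p - z p' - 1\<close> (this is \<open>U_of_quotient p\<close>),
  which is real-linear in \<open>p\<close> and commutes with the reflection \<open>p \<mapsto> cnj \<circ> p \<circ> cnj\<close>.
  Taking real parts of the Taylor coefficients of \<open>p\<close> replaces \<open>p\<close> by the average of \<open>p\<close> and its
  reflection, so \<open>U\<^sub>g(z)\<close> is the average of \<open>U\<^sub>f(z)\<close> and \<open>cnj (U\<^sub>f (cnj z))\<close>, and the bound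
  \<open>\<lambda>\<close> survives by the triangle inequality.\<close>

definition U_of_quotient :: "(complex \<Rightarrow> complex) \<Rightarrow> complex \<Rightarrow> complex" where
  "U_of_quotient p z = p z - z * deriv p z - 1"

lemma deriv_cong_open:
  assumes "open S" "z \<in> S" "\<And>w. w \<in> S \<Longrightarrow> f w = g w"
  shows "deriv f z = deriv g z"
proof -
  have "eventually (\<lambda>w. f w = g w) (nhds z)"
    using eventually_nhds_in_open[OF assms(1,2)] by eventually_elim (use assms(3) in auto)
  then show ?thesis by (rule deriv_cong_ev) simp
qed

lemma Uf_cong_open:
  assumes "open S" "z \<in> S" "\<And>w. w \<in> S \<Longrightarrow> f w = g w"
  shows "Uf f z = Uf g z"
  using deriv_cong_open[OF assms] assms(2,3) by (simp add: Uf_def zdivf_def)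

lemma classU_cong:
  assumes "\<And>z. z \<in> unit_disk \<Longrightarrow> f z = g z"
  shows "classU lam f \<longleftrightarrow> classU lam g"
proof -
  have "f holomorphic_on unit_disk \<longleftrightarrow> g holomorphic_on unit_disk"
    by (rule holomorphic_cong) (simp_all add: assms)
  then have "f analytic_on unit_disk \<longleftrightarrow> g analytic_on unit_disk"
    by (simp add: analytic_on_open)
  moreover have "deriv f 0 = deriv g 0"
    using deriv_cong_open[of unit_disk 0 f g] assms by simp
  moreover have "Uf f z = Uf g z" if "z \<in> unit_disk" for z
    using Uf_cong_open[of unit_disk z f g] assms that by simp
  ultimately show ?thesis
    using assms by (simp add: classU_def classA_def)
qed

lemma zdivf_quotient:
  assumes "p 0 = 1"
  shows "zdivf (\<lambda>w. w / p w) z = p z"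
  using assms by (cases "p z = 0") (auto simp: zdivf_def)

lemma deriv_quotient:
  assumes "(p has_field_derivative p') (at z)" "p z \<noteq> 0"
  shows "deriv (\<lambda>w. w / p w) z = (p z - z * p') / (p z)^2"
proof -
  have "((\<lambda>w. w / p w) has_field_derivative (p z - z * p') / (p z)^2) (at z)"
    using assms by (auto intro!: derivative_eq_intros simp: power2_eq_square)
  then show ?thesis by (rule DERIV_imp_deriv)
qed

lemma Uf_quotient:
  assumes "(p has_field_derivative p') (at z)" "p z \<noteq> 0" "p 0 = 1"
  shows "Uf (\<lambda>w. w / p w) z = p z - z * p' - 1"
  using assms(2) by (simp add: Uf_def zdivf_quotient[of p, OF assms(3)] deriv_quotient[OF assms(1,2)]
      power2_eq_square)

lemma classU_quotient_iff:
  assumes "p holomorphic_on unit_disk" "\<forall>z\<in>unit_disk. p z \<noteq> 0" "p 0 = 1"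
  shows "classU lam (\<lambda>z. z / p z) \<longleftrightarrow> (\<forall>z\<in>unit_disk. cmod (U_of_quotient p z) < lam)"
proof -
  have p_deriv: "(p has_field_derivative deriv p z) (at z)" if "z \<in> unit_disk" for z
    using holomorphic_derivI[OF assms(1) _ that] by simp
  have "(\<lambda>z. z / p z) analytic_on unit_disk"
    using assms(1,2) by (auto simp: analytic_on_open intro!: holomorphic_intros)
  moreover have "deriv (\<lambda>z. z / p z) 0 = 1"
    using deriv_quotient[OF p_deriv] assms(3) by simp
  moreover have "Uf (\<lambda>w. w / p w) z = U_of_quotient p z" if "z \<in> unit_disk" for z
    using Uf_quotient[OF p_deriv[OF that]] assms(2,3) that by (simp add: U_of_quotient_def)
  ultimately show ?thesis
    using assms(2) by (auto simp: classU_def classA_def)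
qed

lemma holomorphic_on_power_series_Suc:
  assumes "\<And>z. z \<in> ball 0 r \<Longrightarrow> (\<lambda>k. a (Suc k) * z ^ Suc k) sums s z"
  shows "s holomorphic_on ball 0 r"
proof (rule power_series_holomorphic)
  fix z :: complex assume "z \<in> ball 0 r"
  then have "(\<lambda>k. (if Suc k = 0 then 0 else a (Suc k)) * (z - 0) ^ Suc k) sums s z"
    using assms by simp
  then show "(\<lambda>n. (if n = 0 then 0 else a n) * (z - 0) ^ n) sums s z"
    by (subst (asm) sums_Suc_iff) simp
qed

lemma sums_Re_coeffs:
  assumes "(\<lambda>k. a k * u k) sums s" "(\<lambda>k. a k * cnj (u k)) sums t"
  shows "(\<lambda>k. complex_of_real (Re (a k)) * u k) sums ((s + cnj t) / 2)"
proof -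
  have "(\<lambda>k. cnj (a k) * u k) sums cnj t"
    using assms(2) by (subst sums_cnj[symmetric]) simp
  from sums_divide[OF sums_add[OF assms(1) this], of 2] show ?thesis
    by (simp add: complex_add_cnj flip: distrib_right)
qed

lemma has_field_derivative_reflection_average:
  assumes "(p has_field_derivative p1) (at z)" "(p has_field_derivative p2) (at (cnj z))"
  shows "((\<lambda>w. (p w + cnj (p (cnj w))) / 2) has_field_derivative (p1 + cnj p2) / 2) (at z)"
proof -
  have "((\<lambda>w. cnj (p (cnj w))) has_field_derivative cnj p2) (at z)"
    using has_field_derivative_cnj_cnj[OF assms(2)] by (simp add: o_def)
  then show ?thesis
    using assms(1) by (auto intro!: derivative_eq_intros)
qed

context
  fixes S :: "complex set" and p :: "complex \<Rightarrow> complex"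
  assumes S_open: "open S" and S_cnj: "\<And>z. z \<in> S \<Longrightarrow> cnj z \<in> S"
    and p_holo: "p holomorphic_on S"
begin

private lemma reflection_average_deriv:
  assumes "z \<in> S"
  shows "((\<lambda>w. (p w + cnj (p (cnj w))) / 2) has_field_derivative
           (deriv p z + cnj (deriv p (cnj z))) / 2) (at z)"
  by (intro has_field_derivative_reflection_average holomorphic_derivI[OF p_holo S_open]
      assms S_cnj)

lemma holomorphic_on_reflection_average:
  "(\<lambda>w. (p w + cnj (p (cnj w))) / 2) holomorphic_on S"
  using reflection_average_deriv S_open
  by (auto simp: holomorphic_on_open field_differentiable_def)

lemma U_of_quotient_reflection_average:
  assumes "z \<in> S"
  shows "U_of_quotient (\<lambda>w. (p w + cnj (p (cnj w))) / 2) z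
           = (U_of_quotient p z + cnj (U_of_quotient p (cnj z))) / 2"
  using DERIV_imp_deriv[OF reflection_average_deriv[OF assms]]
  by (simp add: U_of_quotient_def field_simps)

lemma U_of_quotient_reflection_average_bound:
  assumes "\<forall>z\<in>S. cmod (U_of_quotient p z) < lam" "z \<in> S"
  shows "cmod (U_of_quotient (\<lambda>w. (p w + cnj (p (cnj w))) / 2) z) < lam"
proof -
  have "cmod (U_of_quotient (\<lambda>w. (p w + cnj (p (cnj w))) / 2) z)
          = cmod (U_of_quotient p z + cnj (U_of_quotient p (cnj z))) / 2"
    unfolding U_of_quotient_reflection_average[OF assms(2)] norm_divide by simp
  also have "\<dots> \<le> (cmod (U_of_quotient p z) + cmod (U_of_quotient p (cnj z))) / 2"
    using norm_triangle_ineq[of "U_of_quotient p z" "cnj (U_of_quotient p (cnj z))"] by simp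
  also have "\<dots> < lam"
  proof -
    have "cmod (U_of_quotient p z) < lam" "cmod (U_of_quotient p (cnj z)) < lam"
      using bspec[OF assms(1) assms(2)] bspec[OF assms(1) S_cnj[OF assms(2)]] by auto
    then show ?thesis
      by (simp add: field_simps)
  qed
  finally show ?thesis .
qed

end

lemma classU_imp_U_of_quotient_bound:
  assumes "classU lam f" "p holomorphic_on unit_disk" "\<forall>z\<in>unit_disk. p z = zdivf f z"
  shows "\<forall>z\<in>unit_disk. cmod (U_of_quotient p z) < lam"
proof -
  have f0: "f 0 = 0" and f_nz: "\<And>z. z \<in> unit_disk - {0} \<Longrightarrow> f z \<noteq> 0"
    using assms(1) by (auto simp: classU_def classA_def)
  have p0: "p 0 = 1" and p_nz: "\<forall>z\<in>unit_disk. p z \<noteq> 0"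
    using assms(3) f_nz by (auto simp: zdivf_def)
  have "f z = z / p z" if "z \<in> unit_disk" for z
    using assms(3) f0 f_nz[of z] that by (cases "z = 0") (auto simp: zdivf_def)
  then have "classU lam (\<lambda>z. z / p z)"
    using assms(1) classU_cong[of f "\<lambda>z. z / p z"] by blast
  then show ?thesis
    using classU_quotient_iff[OF assms(2) p_nz p0] by blast
qed

theorem mainTheorem13:
  fixes f :: "complex \<Rightarrow> complex" and b :: "nat \<Rightarrow> complex" and lam :: real
  assumes "0 < lam" and "lam \<le> 1"
    and "classU lam f"
    and "\<forall>z\<in>unit_disk. (\<lambda>k. b (Suc k) * z ^ Suc k) sums (zdivf f z - 1)"
    and "\<forall>z\<in>unit_disk. 1 + (\<Sum>k. complex_of_real (Re (b (Suc k))) * z ^ Suc k) \<noteq> 0"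
  shows "classU lam (\<lambda>z. z / (1 + (\<Sum>k. complex_of_real (Re (b (Suc k))) * z ^ Suc k)))"
proof -
  define P where "P z = 1 + (\<Sum>k. b (Suc k) * z ^ Suc k)" for z
  define Q where "Q z = (P z + cnj (P (cnj z))) / 2" for z
  have P_sums: "(\<lambda>k. b (Suc k) * z ^ Suc k) sums (P z - 1)"
    and P_zdivf: "P z = zdivf f z" if "z \<in> unit_disk" for z
    using assms(4) that by (auto simp: P_def sums_iff)
  have P_holo: "P holomorphic_on unit_disk"
    unfolding P_def using P_sums
    by (intro holomorphic_intros holomorphic_on_power_series_Suc) (auto simp: P_def)
  have P_bound: "\<forall>z\<in>unit_disk. cmod (U_of_quotient P z) < lam"
    using classU_imp_U_of_quotient_bound[OF assms(3) P_holo] P_zdivf by blast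
  have Q_series: "1 + (\<Sum>k. complex_of_real (Re (b (Suc k))) * z ^ Suc k) = Q z"
    if "z \<in> unit_disk" for z
    using sums_Re_coeffs[OF P_sums[OF that], of "P (cnj z) - 1"] P_sums[of "cnj z"] that
    by (auto simp: Q_def sums_iff field_simps)
  have Q_holo: "Q holomorphic_on unit_disk"
    unfolding Q_def by (rule holomorphic_on_reflection_average) (use P_holo in auto)
  have Q_bound: "\<forall>z\<in>unit_disk. cmod (U_of_quotient Q z) < lam"
    unfolding Q_def[abs_def]
    by (auto intro!: U_of_quotient_reflection_average_bound[of unit_disk P, OF _ _ P_holo P_bound])
  have Q0: "Q 0 = 1"
    by (simp add: Q_def P_def)
  have Q_nz: "\<forall>z\<in>unit_disk. Q z \<noteq> 0"
    using assms(5) by (simp flip: Q_series)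
  have "classU lam (\<lambda>z. z / Q z)"
    using classU_quotient_iff[OF Q_holo Q_nz Q0] Q_bound by blast
  moreover have "classU lam (\<lambda>z. z / (1 + (\<Sum>k. complex_of_real (Re (b (Suc k))) * z ^ Suc k)))
      \<longleftrightarrow> classU lam (\<lambda>z. z / Q z)"
    by (rule classU_cong) (simp add: Q_series del: power_Suc)
  ultimately show ?thesis
    by blast
qed

end
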